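(* With the setting in the context, the ground state subspace $\mathcal H_0$ is spanned by vectors of the form $|f_G\rangle:=\mathcal A_0|f\rangle$ with $f\in\mathrm{hom}(C,G)^0$; moreover, for $f\in\mathrm{hom}(C,G)^0$, one has $\mathcal A_0|f\rangle\in\mathcal H_0$ if and only if $f\in\ker(\delta^0)$.
   Context: $(C_\bullet,\partial^C_\bullet)$ is a chain complex with each $C_n$ free abelian on a finite set $K_n$, $K_n\ne\emptyset$ for finitely many $n$; $(G_\bullet,\partial^G_\bullet)$ is a chain complex of finite abelian groups. $\mathrm{hom}(C,G)^p=\prod_n\mathrm{Hom}(C_n,G_{n-p})$ with $(\delta^pf)_n=f_{n-1}\partial^C_n-(-1)^p\partial^G_{n-p}f_n$. $\mathrm{hom}(C,G)_p=\mathrm{Hom}(\mathrm{hom}(C,G)^p,U(1))$ (written additively), $\chi_m(f)=m(f)$, $\delta_{p+1}m=m\circ\delta^p$. $\mathcal H=\bigotimes_n\bigotimes_{x\in K_n}\mathbb C[G_n]$ with orthonormal basis $|f\rangle$, $f\in\mathrm{hom}(C,G)^0$. $P_t|f\rangle=|f+t\rangle$, $Q_m|f\rangle=\chi_m(f)|f\rangle$; $A_t=P_{\delta^{-1}t}$ ($t\in\mathrm{hom}(C,G)^{-1}$), $B_m=Q_{\delta_1m}$ ($m\in\mathrm{hom}(C,G)_1$). $\mathcal A_0=\frac1{|\mathrm{hom}(C,G)^{-1}|}\sum_{t}A_t$. Local elements: for $x\in K_n$, $g\in G_{n-p}$, $gx^*\in\mathrm{hom}(C,G)^p$ has $n$-th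 component sending $x\mapsto g$ and other basis elements to $0$, other components $0$; for $r\in\mathrm{Hom}(G_{n-p},U(1))$, $rx_*(f)=r(f_n(x))$. $A_x^0=\frac1{|G_{n+1}|}\sum_{h\in G_{n+1}}A_{hx^*}$, $B_x^0=\frac1{|G_{n-1}|}\sum_{r\in\mathrm{Hom}(G_{n-1},U(1))}B_{rx_*}$ for $x\in K_n$; the ground state subspace is $\mathcal H_0=\{\Psi: A_x^0\Psi=B_x^0\Psi=\Psi\ \forall n,\forall x\in K_n\}$. *)

theory Defs
  imports Complex_Main
begin

text \<open>The chain complex C is given by finite bases K n (C_n is free
  abelian on K n) and its boundary by integer matrix coefficients dC n x y = coefficient
  of y (in K (n-1)) in the boundary of x (in K n).  A homomorphism C_n -> G_m is given by
  its values on the basis K n.  The finite abelian groups G_n are subgroups G n of one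
  ambient abelian group type 'g, with boundary maps dG n : G n -> G (n-1).
  A cochain f in hom(C,G)^p is a function f n x (n degree, x basis element) with
  f n x in G (n-p) for x in K n and f n x = 0 otherwise.\<close>

definition zsmul :: "int \<Rightarrow> 'a::ab_group_add \<Rightarrow> 'a" where
  "zsmul k a = (if 0 \<le> k then ((+) a ^^ nat k) 0 else - (((+) a ^^ nat (- k)) 0))"

definition cochains :: "(int \<Rightarrow> 'k set) \<Rightarrow> (int \<Rightarrow> 'g::ab_group_add set) \<Rightarrow> int
    \<Rightarrow> (int \<Rightarrow> 'k \<Rightarrow> 'g) set" where
  "cochains K G p = {f. \<forall>n x. (x \<in> K n \<longrightarrow> f n x \<in> G (n - p)) \<and> (x \<notin> K n \<longrightarrow> f n x = 0)}"

text \<open>(f_{n-1} o boundary^C_n)(x) for x in K n\<close>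
definition compC :: "(int \<Rightarrow> 'k set) \<Rightarrow> (int \<Rightarrow> 'k \<Rightarrow> 'k \<Rightarrow> int) \<Rightarrow> int
    \<Rightarrow> (int \<Rightarrow> 'k \<Rightarrow> 'g::ab_group_add) \<Rightarrow> 'k \<Rightarrow> 'g" where
  "compC K dC n f x = (\<Sum>y\<in>K (n - 1). zsmul (dC n x y) (f (n - 1) y))"

text \<open>(delta^p f)_n = f_{n-1} boundary^C_n - (-1)^p boundary^G_{n-p} f_n\<close>
definition delta :: "(int \<Rightarrow> 'k set) \<Rightarrow> (int \<Rightarrow> 'k \<Rightarrow> 'k \<Rightarrow> int) \<Rightarrow> (int \<Rightarrow> 'g \<Rightarrow> 'g)
    \<Rightarrow> int \<Rightarrow> (int \<Rightarrow> 'k \<Rightarrow> 'g::ab_group_add) \<Rightarrow> (int \<Rightarrow> 'k \<Rightarrow> 'g)" where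
  "delta K dC dG p f = (\<lambda>n x. if x \<in> K n then
      (if even p then compC K dC n f x - dG (n - p) (f n x)
                 else compC K dC n f x + dG (n - p) (f n x))
    else 0)"

text \<open>Vectors of the Hilbert space: complex functions on configurations, vanishing
  outside hom(C,G)^0 (coefficients w.r.t. the orthonormal basis |f>).\<close>
definition Hspace :: "(int \<Rightarrow> 'k set) \<Rightarrow> (int \<Rightarrow> 'g::ab_group_add set)
    \<Rightarrow> ((int \<Rightarrow> 'k \<Rightarrow> 'g) \<Rightarrow> complex) set" where
  "Hspace K G = {\<Psi>. \<forall>g. g \<notin> cochains K G 0 \<longrightarrow> \<Psi> g = 0}"

definition ket :: "'c \<Rightarrow> ('c \<Rightarrow> complex)" where
  "ket f = (\<lambda>g. if g = f then 1 else 0)"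

text \<open>P_t |f> = |f + t>\<close>
definition Pop :: "(int \<Rightarrow> 'k \<Rightarrow> 'g::ab_group_add) \<Rightarrow> ((int \<Rightarrow> 'k \<Rightarrow> 'g) \<Rightarrow> complex)
    \<Rightarrow> ((int \<Rightarrow> 'k \<Rightarrow> 'g) \<Rightarrow> complex)" where
  "Pop t \<Psi> = (\<lambda>g. \<Psi> (\<lambda>n x. g n x - t n x))"

definition Qop :: "('c \<Rightarrow> complex) \<Rightarrow> ('c \<Rightarrow> complex) \<Rightarrow> ('c \<Rightarrow> complex)" where
  "Qop m \<Psi> = (\<lambda>g. m g * \<Psi> g)"

definition Aop where
  "Aop K dC dG t = Pop (delta K dC dG (-1) t)"

definition Bop where
  "Bop K dC dG m = Qop (\<lambda>f. m (delta K dC dG 0 f))"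

definition A0 where
  "A0 K G dC dG \<Psi> = (\<lambda>g. (1 / of_nat (card (cochains K G (-1)))) *
      (\<Sum>t\<in>cochains K G (-1). Aop K dC dG t \<Psi> g))"

text \<open>Characters Hom(S, U(1)) of a finite subgroup S (extended by 1 outside S)\<close>
definition chars :: "'g::ab_group_add set \<Rightarrow> ('g \<Rightarrow> complex) set" where
  "chars S = {r. (\<forall>a\<in>S. \<forall>b\<in>S. r (a + b) = r a * r b) \<and> (\<forall>a\<in>S. cmod (r a) = 1)
                 \<and> (\<forall>a. a \<notin> S \<longrightarrow> r a = 1)}"

definition locdual :: "'g::zero \<Rightarrow> int \<Rightarrow> 'k \<Rightarrow> (int \<Rightarrow> 'k \<Rightarrow> 'g)" where
  "locdual h n x = (\<lambda>m y. if m = n \<and> y = x then h else 0)"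

definition locchar :: "('g \<Rightarrow> complex) \<Rightarrow> int \<Rightarrow> 'k \<Rightarrow> ((int \<Rightarrow> 'k \<Rightarrow> 'g) \<Rightarrow> complex)" where
  "locchar r n x = (\<lambda>f. r (f n x))"

definition Ax0 where
  "Ax0 K G dC dG n x \<Psi> = (\<lambda>g. (1 / of_nat (card (G (n + 1)))) *
      (\<Sum>h\<in>G (n + 1). Aop K dC dG (locdual h n x) \<Psi> g))"

definition Bx0 where
  "Bx0 K G dC dG n x \<Psi> = (\<lambda>g. (1 / of_nat (card (G (n - 1)))) *
      (\<Sum>r\<in>chars (G (n - 1)). Bop K dC dG (locchar r n x) \<Psi> g))"

definition H0 where
  "H0 K G dC dG = {\<Psi> \<in> Hspace K G. \<forall>n x. x \<in> K n \<longrightarrow>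
      Ax0 K G dC dG n x \<Psi> = \<Psi> \<and> Bx0 K G dC dG n x \<Psi> = \<Psi>}"

definition cspan :: "('c \<Rightarrow> complex) set \<Rightarrow> ('c \<Rightarrow> complex) set" where
  "cspan S = {\<Psi>. \<exists>A c. finite A \<and> A \<subseteq> S \<and> \<Psi> = (\<lambda>g. \<Sum>v\<in>A. c v * v g)}"

end

theory Submission
  imports Defs "HOL-Library.FuncSet"
begin

text \<open>
  The vertex operators A_t with t in hom(C,G)^(-1) translate configurations by the coboundaries
  of t. Every such t is a finite sum of local cochains h x^*, and averaging over G_(n+1) turns
  A_x^0 into the projection onto vectors fixed by the local translations; hence the common fixed
  vectors of the A_x^0 are exactly the vectors invariant under all A_t. By orthogonality of the
  characters of the finite abelian group G_(n-1), B_x^0 is the projection onto configurations f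
  with (delta^0 f)_n(x) = 0. So H_0 consists of the translation invariant vectors supported on
  cocycles. The vector A_0|f> is invariant and supported on the coset f + im delta^(-1), which
  consists of cocycles exactly when f is one, since delta^0 delta^(-1) = 0; conversely every
  invariant vector supported on cocycles is the combination of the A_0|f> with coefficients Psi(f).

  Character orthogonality rests on the characters of a finite group S separating points and
  being card S in number. Both follow by adjoining one element s to a subgroup H at a time:
  a character of H has exactly as many extensions to H + <s> as the order of s modulo H.
\<close>

section \<open>Integer multiples and additive subgroups\<close>

lemma zsmul_succ: "zsmul (k + 1) a = zsmul k a + a"
proof -
  have unfold: "((+) a ^^ Suc j) 0 = a + ((+) a ^^ j) 0" for j by simp
  consider "k \<ge> 0" | "k = -1" | "k \<le> -2" by linarith
  then show ?thesis
  proof cases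
    case 1
    then have "nat (k + 1) = Suc (nat k)" by simp
    with 1 show ?thesis by (simp add: zsmul_def unfold add.commute)
  next
    case 2
    then show ?thesis by (simp add: zsmul_def)
  next
    case 3
    then have "nat (- k) = Suc (nat (- (k + 1)))" by simp
    with 3 show ?thesis by (simp add: zsmul_def unfold)
  qed
qed

lemma zsmul_0 [simp]: "zsmul 0 a = 0"
  by (simp add: zsmul_def)

lemma zsmul_1 [simp]: "zsmul 1 a = a"
  using zsmul_succ[of 0 a] by simp

lemma zsmul_add: "zsmul (k + l) a = zsmul k a + zsmul l a"
proof (induction l rule: int_induct[where k = 0])
  case (step1 i)
  then show ?case using zsmul_succ[of "k + i" a] zsmul_succ[of i a] by (simp add: add.assoc)
next
  case (step2 i)
  then show ?case using zsmul_succ[of "k + i - 1" a] zsmul_succ[of "i - 1" a]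
    by (simp add: algebra_simps)
qed simp

lemma zsmul_uminus: "zsmul (- k) a = - zsmul k a"
  using zsmul_add[of k "- k" a] by (simp add: eq_neg_iff_add_eq_0 add.commute)

lemma zsmul_diff: "zsmul (k - l) a = zsmul k a - zsmul l a"
  using zsmul_add[of k "- l" a] by (simp add: zsmul_uminus)

lemma zsmul_distrib: "zsmul k (a + b) = zsmul k a + zsmul k b"
proof (induction k rule: int_induct[where k = 0])
  case (step1 i)
  then show ?case by (simp only: zsmul_succ) (simp add: ac_simps)
next
  case (step2 i)
  then show ?case by (simp add: zsmul_diff algebra_simps)
qed simp

lemma zsmul_zero [simp]: "zsmul k 0 = 0"
  using zsmul_distrib[of k 0 0] by simp

lemma zsmul_mult: "zsmul (k * l) a = zsmul k (zsmul l a)"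
proof (induction k rule: int_induct[where k = 0])
  case (step1 i)
  then show ?case by (simp add: distrib_right zsmul_add zsmul_succ)
next
  case (step2 i)
  then show ?case by (simp add: left_diff_distrib zsmul_diff)
qed simp

lemma zsmul_div_mod: "zsmul k a = zsmul (k div m) (zsmul m a) + zsmul (k mod m) a"
  using zsmul_add[of "k div m * m" "k mod m" a] by (simp only: zsmul_mult div_mult_mod_eq)

lemma zsmul_sum: "zsmul k (\<Sum>y\<in>A. f y) = (\<Sum>y\<in>A. zsmul k (f y))"
  by (induction A rule: infinite_finite_induct) (simp_all add: zsmul_distrib)

lemma sum_zsmul: "(\<Sum>y\<in>A. zsmul (f y) a) = zsmul (\<Sum>y\<in>A. f y) a"
  by (induction A rule: infinite_finite_induct) (simp_all add: zsmul_add)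

definition additive_subgroup :: "'g::ab_group_add set \<Rightarrow> bool" where
  "additive_subgroup H \<longleftrightarrow> 0 \<in> H \<and> (\<forall>a\<in>H. \<forall>b\<in>H. a + b \<in> H) \<and> (\<forall>a\<in>H. - a \<in> H)"

lemma additive_subgroupI:
  "0 \<in> H \<Longrightarrow> (\<And>a b. a \<in> H \<Longrightarrow> b \<in> H \<Longrightarrow> a + b \<in> H) \<Longrightarrow> (\<And>a. a \<in> H \<Longrightarrow> - a \<in> H)
    \<Longrightarrow> additive_subgroup H"
  unfolding additive_subgroup_def by blast

context
  fixes H :: "'g::ab_group_add set"
  assumes H: "additive_subgroup H"
begin

lemma subgroup_zero: "0 \<in> H"
  and subgroup_add: "a \<in> H \<Longrightarrow> b \<in> H \<Longrightarrow> a + b \<in> H"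
  and subgroup_uminus: "a \<in> H \<Longrightarrow> - a \<in> H"
  using H unfolding additive_subgroup_def by blast+

lemma subgroup_diff: "a \<in> H \<Longrightarrow> b \<in> H \<Longrightarrow> a - b \<in> H"
  unfolding diff_conv_add_uminus by (intro subgroup_add subgroup_uminus)

lemma subgroup_zsmul: "a \<in> H \<Longrightarrow> zsmul k a \<in> H"
proof (induction k rule: int_induct[where k = 0])
  case (step1 i)
  then show ?case by (simp add: zsmul_succ subgroup_add)
next
  case (step2 i)
  then show ?case by (simp add: zsmul_diff subgroup_diff)
qed (simp add: subgroup_zero)

lemma subgroup_sum: "(\<And>y. y \<in> A \<Longrightarrow> f y \<in> H) \<Longrightarrow> sum f A \<in> H"
  by (induction A rule: infinite_finite_induct) (auto simp: subgroup_zero subgroup_add)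

lemma bij_betw_add_left:
  assumes a: "a \<in> H"
  shows "bij_betw ((+) a) H H"
proof (rule bij_betw_byWitness[where f' = "\<lambda>b. b - a"])
  show "(+) a ` H \<subseteq> H" "(\<lambda>b. b - a) ` H \<subseteq> H"
    using subgroup_add[OF a] subgroup_diff[OF _ a] by auto
qed auto

lemma additive_hom_zsmul:
  assumes hom: "\<And>a b. a \<in> H \<Longrightarrow> b \<in> H \<Longrightarrow> h (a + b) = h a + h b" and a: "a \<in> H"
  shows "h (zsmul k a) = zsmul k (h a)"
proof -
  have h0: "h 0 = 0" using hom[OF subgroup_zero subgroup_zero] by simp
  have hdiff: "h (b - a) = h b - h a" if "b \<in> H" for b
    using hom[OF subgroup_diff[OF that a] a] by (simp add: algebra_simps)
  show ?thesis
  proof (induction k rule: int_induct[where k = 0])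
    case (step1 i)
    then show ?case by (simp add: zsmul_succ hom subgroup_zsmul a)
  next
    case (step2 i)
    then show ?case by (simp add: zsmul_diff hdiff subgroup_zsmul a)
  qed (simp add: h0)
qed

lemma additive_hom_sum:
  fixes h :: "'g \<Rightarrow> 'b::ab_group_add"
  assumes hom: "\<And>a b. a \<in> H \<Longrightarrow> b \<in> H \<Longrightarrow> h (a + b) = h a + h b"
    and f: "\<And>y. y \<in> A \<Longrightarrow> f y \<in> H"
  shows "h (sum f A) = (\<Sum>y\<in>A. h (f y))"
proof -
  have h0: "h 0 = 0" using hom[OF subgroup_zero subgroup_zero] by simp
  show ?thesis
    using f by (induction A rule: infinite_finite_induct) (simp_all add: h0 hom subgroup_sum)
qed

end

section \<open>Characters of finite abelian groups\<close>

lemma chars_add: "r \<in> chars S \<Longrightarrow> a \<in> S \<Longrightarrow> b \<in> S \<Longrightarrow> r (a + b) = r a * r b"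
  and chars_norm: "r \<in> chars S \<Longrightarrow> a \<in> S \<Longrightarrow> cmod (r a) = 1"
  and chars_outside: "r \<in> chars S \<Longrightarrow> a \<notin> S \<Longrightarrow> r a = 1"
  unfolding chars_def by auto

lemma chars_nonzero: "r \<in> chars S \<Longrightarrow> r a \<noteq> 0"
  by (cases "a \<in> S") (auto dest: chars_norm chars_outside)

context
  fixes S :: "'g::ab_group_add set" and r :: "'g \<Rightarrow> complex"
  assumes S: "additive_subgroup S" and r: "r \<in> chars S"
begin

lemma chars_zero: "r 0 = 1"
  using chars_add[OF r subgroup_zero[OF S] subgroup_zero[OF S]] chars_nonzero[OF r, of 0] by simp

lemma chars_diff: "a \<in> S \<Longrightarrow> b \<in> S \<Longrightarrow> r (a - b) = r a / r b"
  using chars_add[OF r subgroup_diff[OF S], of a b b] chars_nonzero[OF r, of b]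
  by (simp add: field_simps)

lemma chars_zsmul: "a \<in> S \<Longrightarrow> r (zsmul k a) = r a powi k"
proof (induction k rule: int_induct[where k = 0])
  case (step1 i)
  then show ?case
    by (simp add: zsmul_succ chars_add[OF r] subgroup_zsmul[OF S] chars_nonzero[OF r] power_int_add_1)
next
  case (step2 i)
  then show ?case
    by (simp add: zsmul_diff chars_diff subgroup_zsmul[OF S] chars_nonzero[OF r] power_int_diff)
qed (simp add: chars_zero)

end

definition char_restrict :: "'g set \<Rightarrow> ('g \<Rightarrow> complex) \<Rightarrow> 'g \<Rightarrow> complex" where
  "char_restrict H r = (\<lambda>a. if a \<in> H then r a else 1)"

definition char_extensions :: "'g::ab_group_add set \<Rightarrow> 'g set \<Rightarrow> ('g \<Rightarrow> complex) \<Rightarrow> ('g \<Rightarrow> complex) set" where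
  "char_extensions S H \<chi> = {r \<in> chars S. char_restrict H r = \<chi>}"

lemma char_restrict_in_chars:
  assumes "r \<in> chars S" "H \<subseteq> S" "additive_subgroup H"
  shows "char_restrict H r \<in> chars H"
  using chars_add[OF assms(1)] chars_norm[OF assms(1)] subgroup_add[OF assms(3)] assms(2)
  unfolding chars_def char_restrict_def by (auto simp: subset_iff)

lemma char_restrict_char_restrict: "H \<subseteq> H' \<Longrightarrow> char_restrict H (char_restrict H' r) = char_restrict H r"
  unfolding char_restrict_def by (rule ext) auto

lemma char_restrict_self: "r \<in> chars S \<Longrightarrow> char_restrict S r = r"
  unfolding char_restrict_def by (auto intro!: ext dest: chars_outside)

lemma char_extensions_UN:
  assumes "H \<subseteq> J" "J \<subseteq> S" "additive_subgroup J"
  shows "char_extensions S H \<chi> = (\<Union>\<chi>'\<in>char_extensions J H \<chi>. char_extensions S J \<chi>')"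
  using char_restrict_in_chars[OF _ assms(2,3)] char_restrict_char_restrict[OF assms(1)]
  unfolding char_extensions_def by auto

lemma card_char_extensions_UN:
  assumes "H \<subseteq> J" "J \<subseteq> S" "additive_subgroup J" "finite (char_extensions J H \<chi>)"
    and card: "\<And>\<chi>'. \<chi>' \<in> char_extensions J H \<chi> \<Longrightarrow> card (char_extensions S J \<chi>') = c" and "0 < c"
  shows "card (char_extensions S H \<chi>) = card (char_extensions J H \<chi>) * c"
proof -
  have "card (char_extensions S H \<chi>) = (\<Sum>\<chi>'\<in>char_extensions J H \<chi>. card (char_extensions S J \<chi>'))"
    unfolding char_extensions_UN[OF assms(1-3)]
  proof (rule card_UN_disjoint)
    show "\<forall>\<chi>'\<in>char_extensions J H \<chi>. finite (char_extensions S J \<chi>')"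
      using card \<open>0 < c\<close> card_ge_0_finite by metis
  qed (use assms(4) in \<open>auto simp: char_extensions_def\<close>)
  then show ?thesis
    using card by simp
qed

lemma char_extensions_apply: "r \<in> char_extensions S H \<chi> \<Longrightarrow> a \<in> H \<Longrightarrow> r a = \<chi> a"
  unfolding char_extensions_def char_restrict_def by auto

definition subgroup_join :: "'g::ab_group_add set \<Rightarrow> 'g \<Rightarrow> 'g set" where
  "subgroup_join H s = {a. \<exists>k. a - zsmul k s \<in> H}"

definition order_mod :: "'g::ab_group_add set \<Rightarrow> 'g \<Rightarrow> nat" where
  "order_mod H s = (LEAST m. 0 < m \<and> zsmul (int m) s \<in> H)"

lemma eq_of_dvd_diff_range:
  fixes a b m :: int
  assumes "m dvd a - b" "0 \<le> a" "a < m" "0 \<le> b" "b < m"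
  shows "a = b"
  using assms mod_eq_dvd_iff[of a m b] by simp

context
  fixes S H :: "'g::ab_group_add set" and s :: 'g
  assumes S: "finite S" "additive_subgroup S"
    and H: "additive_subgroup H" "H \<subseteq> S"
    and s: "s \<in> S"
begin

lemma order_mod_ex: "\<exists>m>0. zsmul (int m) s \<in> H"
proof -
  have "\<not> inj_on (\<lambda>j. zsmul (int j) s) {0..card S}"
  proof
    assume "inj_on (\<lambda>j. zsmul (int j) s) {0..card S}"
    then have "card ((\<lambda>j. zsmul (int j) s) ` {0..card S}) = Suc (card S)"
      by (simp add: card_image)
    moreover have "card ((\<lambda>j. zsmul (int j) s) ` {0..card S}) \<le> card S"
      using S s subgroup_zsmul by (intro card_mono) auto
    ultimately show False by simp
  qed
  then obtain i j where "i < j" "zsmul (int i) s = zsmul (int j) s"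
    unfolding inj_on_def by (metis linorder_neqE_nat)
  then have "0 < j - i" "zsmul (int (j - i)) s \<in> H"
    using zsmul_diff[of "int j" "int i" s] subgroup_zero[OF H(1)] by (simp_all add: of_nat_diff)
  then show ?thesis by blast
qed

lemma order_mod_pos: "0 < order_mod H s"
  and zsmul_order_mod: "zsmul (int (order_mod H s)) s \<in> H"
  using LeastI_ex[OF order_mod_ex] unfolding order_mod_def by blast+

lemma order_mod_least: "0 < j \<Longrightarrow> j < order_mod H s \<Longrightarrow> zsmul (int j) s \<notin> H"
  using not_less_Least[of j "\<lambda>m. 0 < m \<and> zsmul (int m) s \<in> H"] unfolding order_mod_def by blast

lemma zsmul_mem_iff_dvd: "zsmul k s \<in> H \<longleftrightarrow> int (order_mod H s) dvd k"
proof
  let ?m = "int (order_mod H s)"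
  assume k: "zsmul k s \<in> H"
  have "zsmul (k mod ?m) s = zsmul k s - zsmul (k div ?m) (zsmul ?m s)"
    using zsmul_div_mod[of k s ?m] by (simp add: algebra_simps)
  then have "zsmul (int (nat (k mod ?m))) s \<in> H"
    using order_mod_pos by (simp add: subgroup_diff[OF H(1) k] subgroup_zsmul[OF H(1)] zsmul_order_mod)
  moreover have "nat (k mod ?m) < order_mod H s"
    using order_mod_pos by (simp add: nat_less_iff)
  ultimately have "nat (k mod ?m) = 0"
    using order_mod_least by blast
  moreover have "0 \<le> k mod ?m"
    using order_mod_pos by simp
  ultimately show "?m dvd k"
    by (simp add: dvd_eq_mod_eq_0)
next
  assume "int (order_mod H s) dvd k"
  then obtain q where k: "k = int (order_mod H s) * q" unfolding dvd_def by blast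
  have "zsmul k s = zsmul q (zsmul (int (order_mod H s)) s)"
    unfolding k using zsmul_mult[of q "int (order_mod H s)" s] by (simp add: mult.commute)
  then show "zsmul k s \<in> H"
    using subgroup_zsmul[OF H(1) zsmul_order_mod] by simp
qed

lemma subgroup_join_subgroup: "additive_subgroup (subgroup_join H s)"
proof (rule additive_subgroupI)
  show "0 \<in> subgroup_join H s"
    unfolding subgroup_join_def using subgroup_zero[OF H(1)] by (intro CollectI exI[of _ 0]) simp
next
  fix a b assume "a \<in> subgroup_join H s" "b \<in> subgroup_join H s"
  then obtain k k' where "a - zsmul k s \<in> H" "b - zsmul k' s \<in> H"
    unfolding subgroup_join_def by blast
  then have "(a - zsmul k s) + (b - zsmul k' s) \<in> H"
    by (rule subgroup_add[OF H(1)])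
  then have "(a + b) - zsmul (k + k') s \<in> H"
    by (simp add: zsmul_add algebra_simps)
  then show "a + b \<in> subgroup_join H s"
    unfolding subgroup_join_def by blast
next
  fix a assume "a \<in> subgroup_join H s"
  then obtain k where "a - zsmul k s \<in> H"
    unfolding subgroup_join_def by blast
  then have "- (a - zsmul k s) \<in> H"
    by (rule subgroup_uminus[OF H(1)])
  then have "- a - zsmul (- k) s \<in> H"
    by (simp add: zsmul_uminus)
  then show "- a \<in> subgroup_join H s"
    unfolding subgroup_join_def by blast
qed

lemma subset_subgroup_join: "H \<subseteq> subgroup_join H s"
  unfolding subgroup_join_def by (auto intro: exI[of _ 0])

lemma mem_subgroup_join: "s \<in> subgroup_join H s"
  unfolding subgroup_join_def using subgroup_zero[OF H(1)] by (auto intro: exI[of _ 1])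

lemma subgroup_join_subset: "subgroup_join H s \<subseteq> S"
proof
  fix a assume "a \<in> subgroup_join H s"
  then obtain k where "a - zsmul k s \<in> S"
    using H(2) unfolding subgroup_join_def by blast
  then show "a \<in> S"
    using subgroup_add[OF S(2) _ subgroup_zsmul[OF S(2) s, of k]] by force
qed

lemma subgroup_join_decompose:
  assumes "a \<in> subgroup_join H s"
  obtains h k where "h \<in> H" "k < order_mod H s" "a = h + zsmul (int k) s"
proof -
  let ?m = "order_mod H s"
  obtain k where k: "a - zsmul k s \<in> H"
    using assms unfolding subgroup_join_def by blast
  let ?h = "(a - zsmul k s) + zsmul (k div ?m) (zsmul (int ?m) s)"
  have "a = ?h + zsmul (int (nat (k mod ?m))) s"
    using order_mod_pos zsmul_div_mod[of k s "int ?m"] by (simp add: add.assoc)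
  moreover have "?h \<in> H"
    using subgroup_add[OF H(1) k subgroup_zsmul[OF H(1) zsmul_order_mod]] .
  moreover have "nat (k mod ?m) < ?m"
    using order_mod_pos by (simp add: nat_less_iff)
  ultimately show ?thesis
    using that by blast
qed

lemma card_subgroup_join: "card (subgroup_join H s) = order_mod H s * card H"
proof -
  let ?m = "order_mod H s"
  let ?f = "\<lambda>(h, k). h + zsmul (int k) s"
  have "inj_on ?f (H \<times> {..<?m})"
  proof (rule inj_onI, clarify)
    fix h k h' k'
    assume h: "h \<in> H" "h' \<in> H" and k: "k < ?m" "k' < ?m"
      and eq: "h + zsmul (int k) s = h' + zsmul (int k') s"
    then have "zsmul (int k - int k') s = h' - h"
      by (simp add: zsmul_diff algebra_simps)
    then have "int ?m dvd int k - int k'"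
      using subgroup_diff[OF H(1) h(2,1)] zsmul_mem_iff_dvd by metis
    then have "k = k'"
      using eq_of_dvd_diff_range[of "int ?m" "int k" "int k'"] k by simp
    then show "h = h' \<and> k = k'"
      using eq by simp
  qed
  moreover have "?f ` (H \<times> {..<?m}) = subgroup_join H s"
  proof
    show "?f ` (H \<times> {..<?m}) \<subseteq> subgroup_join H s"
    proof clarify
      fix h k assume "h \<in> H"
      then show "h + zsmul (int k) s \<in> subgroup_join H s"
        unfolding subgroup_join_def by (intro CollectI exI[of _ "int k"]) simp
    qed
  next
    show "subgroup_join H s \<subseteq> ?f ` (H \<times> {..<?m})"
      by (auto elim!: subgroup_join_decompose)
  qed
  ultimately have "bij_betw ?f (H \<times> {..<?m}) (subgroup_join H s)"
    unfolding bij_betw_def ..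
  then have "card (subgroup_join H s) = card (H \<times> {..<?m})"
    by (simp add: bij_betw_same_card)
  then show ?thesis
    by (simp add: card_cartesian_product)
qed

lemma char_extensions_join_apply:
  assumes r: "r \<in> char_extensions (subgroup_join H s) H \<chi>" and a: "a - zsmul k s \<in> H"
  shows "r a = \<chi> (a - zsmul k s) * r s powi k"
proof -
  have rJ: "r \<in> chars (subgroup_join H s)"
    using r unfolding char_extensions_def by blast
  have "r a = r ((a - zsmul k s) + zsmul k s)"
    by simp
  also have "\<dots> = r (a - zsmul k s) * r (zsmul k s)"
    using a subset_subgroup_join subgroup_zsmul[OF subgroup_join_subgroup mem_subgroup_join]
    by (intro chars_add[OF rJ]) auto
  finally show ?thesis
    using char_extensions_apply[OF r a] chars_zsmul[OF subgroup_join_subgroup rJ mem_subgroup_join]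
    by simp
qed

lemma char_extensions_join_root:
  assumes r: "r \<in> char_extensions (subgroup_join H s) H \<chi>"
  shows "r s ^ order_mod H s = \<chi> (zsmul (int (order_mod H s)) s)"
proof -
  have "\<chi> 0 = 1"
    using r chars_zero[OF subgroup_join_subgroup] char_extensions_apply[OF r subgroup_zero[OF H(1)]]
    unfolding char_extensions_def by force
  then show ?thesis
    using char_extensions_join_apply[OF r, of "zsmul (int (order_mod H s)) s" "int (order_mod H s)"]
      char_extensions_apply[OF r zsmul_order_mod] subgroup_zero[OF H(1)]
    by simp
qed

lemma char_join_value_well_defined:
  assumes \<chi>: "\<chi> \<in> chars H" and \<omega>: "\<omega> ^ order_mod H s = \<chi> (zsmul (int (order_mod H s)) s)"
    and k: "a - zsmul k s \<in> H" and k': "a - zsmul k' s \<in> H"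
  shows "\<chi> (a - zsmul k s) * \<omega> powi k = \<chi> (a - zsmul k' s) * \<omega> powi k'"
proof -
  let ?m = "order_mod H s"
  have "\<omega> \<noteq> 0"
    using \<omega> chars_nonzero[OF \<chi>, of "zsmul (int ?m) s"] order_mod_pos by (auto simp: power_0_left)
  have "zsmul (k' - k) s \<in> H"
    using subgroup_diff[OF H(1) k k'] by (simp add: zsmul_diff)
  then obtain q where q: "k' - k = int ?m * q"
    using zsmul_mem_iff_dvd by blast
  have split: "a - zsmul k s = (a - zsmul k' s) + zsmul q (zsmul (int ?m) s)"
    using zsmul_add[of k "q * int ?m" s] zsmul_mult[of q "int ?m" s] q
    by (simp add: algebra_simps)
  have "\<chi> (a - zsmul k s) = \<chi> (a - zsmul k' s) * \<chi> (zsmul q (zsmul (int ?m) s))"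
    unfolding split by (rule chars_add[OF \<chi> k' subgroup_zsmul[OF H(1) zsmul_order_mod]])
  also have "\<chi> (zsmul q (zsmul (int ?m) s)) = \<omega> powi (k' - k)"
    using chars_zsmul[OF H(1) \<chi> zsmul_order_mod, of q] \<omega> q by (simp add: power_int_mult)
  finally show ?thesis
    using \<open>\<omega> \<noteq> 0\<close> by (simp add: power_int_diff field_simps)
qed

lemma char_extensions_join_exists:
  assumes \<chi>: "\<chi> \<in> chars H" and \<omega>: "\<omega> ^ order_mod H s = \<chi> (zsmul (int (order_mod H s)) s)"
  shows "\<exists>r\<in>char_extensions (subgroup_join H s) H \<chi>. r s = \<omega>"
proof -
  let ?m = "order_mod H s"
  define r where "r a = (if a \<in> subgroup_join H s
    then \<chi> (a - zsmul (SOME k. a - zsmul k s \<in> H) s) * \<omega> powi (SOME k. a - zsmul k s \<in> H) else 1)" for a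
  have "cmod \<omega> ^ ?m = 1"
    using \<omega> chars_norm[OF \<chi> zsmul_order_mod] by (metis norm_power)
  then have \<omega>_norm: "cmod \<omega> = 1"
    using order_mod_pos by (intro power_eq_imp_eq_base[of _ ?m 1]) auto
  then have \<omega>_nz: "\<omega> \<noteq> 0" by auto
  have r_apply: "r a = \<chi> (a - zsmul k s) * \<omega> powi k" if k: "a - zsmul k s \<in> H" for a k
  proof -
    have "a \<in> subgroup_join H s"
      using k unfolding subgroup_join_def by blast
    moreover have "a - zsmul (SOME k. a - zsmul k s \<in> H) s \<in> H"
      using someI[of "\<lambda>k. a - zsmul k s \<in> H", OF k] .
    ultimately show ?thesis
      unfolding r_def using char_join_value_well_defined[OF \<chi> \<omega> _ k] by simp
  qed
  have "r \<in> chars (subgroup_join H s)"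
    unfolding chars_def
  proof (intro CollectI conjI ballI allI impI)
    fix a b assume "a \<in> subgroup_join H s" "b \<in> subgroup_join H s"
    then obtain k k' where k: "a - zsmul k s \<in> H" and k': "b - zsmul k' s \<in> H"
      unfolding subgroup_join_def by blast
    have split: "(a + b) - zsmul (k + k') s = (a - zsmul k s) + (b - zsmul k' s)"
      by (simp add: zsmul_add algebra_simps)
    have "r (a + b) = \<chi> ((a - zsmul k s) + (b - zsmul k' s)) * \<omega> powi (k + k')"
      using r_apply[of "a + b" "k + k'"] subgroup_add[OF H(1) k k'] unfolding split by simp
    then show "r (a + b) = r a * r b"
      using r_apply[OF k] r_apply[OF k'] chars_add[OF \<chi> k k'] \<omega>_nz
      by (simp add: power_int_add)
  next
    fix a assume "a \<in> subgroup_join H s"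
    then obtain k where k: "a - zsmul k s \<in> H"
      unfolding subgroup_join_def by blast
    then show "cmod (r a) = 1"
      using r_apply[OF k] chars_norm[OF \<chi> k] \<omega>_norm by (simp add: norm_mult norm_power_int)
  qed (simp add: r_def)
  moreover have "char_restrict H r = \<chi>"
    using r_apply[of _ 0] chars_outside[OF \<chi>] unfolding char_restrict_def by auto
  moreover have "r s = \<omega>"
    using r_apply[of s 1] chars_zero[OF H(1) \<chi>] subgroup_zero[OF H(1)] by simp
  ultimately show ?thesis
    unfolding char_extensions_def by blast
qed

lemma bij_betw_char_extensions_join:
  assumes \<chi>: "\<chi> \<in> chars H"
  shows "bij_betw (\<lambda>r. r s) (char_extensions (subgroup_join H s) H \<chi>)
           {\<omega>. \<omega> ^ order_mod H s = \<chi> (zsmul (int (order_mod H s)) s)}"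
  unfolding bij_betw_def
proof (intro conjI inj_onI subset_antisym subsetI)
  fix r r' assume r: "r \<in> char_extensions (subgroup_join H s) H \<chi>"
    and r': "r' \<in> char_extensions (subgroup_join H s) H \<chi>" and eq: "r s = r' s"
  show "r = r'"
  proof
    fix a show "r a = r' a"
    proof (cases "a \<in> subgroup_join H s")
      case True
      then obtain k where "a - zsmul k s \<in> H"
        unfolding subgroup_join_def by blast
      then show ?thesis
        using char_extensions_join_apply[OF r] char_extensions_join_apply[OF r'] eq by simp
    next
      case False
      then show ?thesis
        using r r' chars_outside[of r "subgroup_join H s" a] chars_outside[of r' "subgroup_join H s" a]
        unfolding char_extensions_def by simp
    qed
  qed
next
  fix \<omega> assume "\<omega> \<in> (\<lambda>r. r s) ` char_extensions (subgroup_join H s) H \<chi>"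
  then show "\<omega> \<in> {\<omega>. \<omega> ^ order_mod H s = \<chi> (zsmul (int (order_mod H s)) s)}"
    using char_extensions_join_root by blast
next
  fix \<omega> assume "\<omega> \<in> {\<omega>. \<omega> ^ order_mod H s = \<chi> (zsmul (int (order_mod H s)) s)}"
  then show "\<omega> \<in> (\<lambda>r. r s) ` char_extensions (subgroup_join H s) H \<chi>"
    using char_extensions_join_exists[OF \<chi>] by force
qed

lemma card_char_extensions_join:
  assumes "\<chi> \<in> chars H"
  shows "card (char_extensions (subgroup_join H s) H \<chi>) = order_mod H s"
  using bij_betw_same_card[OF bij_betw_char_extensions_join[OF assms]]
    card_nth_roots[OF chars_nonzero[OF assms] order_mod_pos] by simp

end

lemma card_char_extensions:
  assumes S: "finite S" "additive_subgroup S"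
  shows "additive_subgroup H \<Longrightarrow> H \<subseteq> S \<Longrightarrow> \<chi> \<in> chars H \<Longrightarrow>
    card S = card H * card (char_extensions S H \<chi>)"
proof (induction "card (S - H)" arbitrary: H \<chi> rule: less_induct)
  case less
  show ?case
  proof (cases "H = S")
    case True
    then have "char_extensions S H \<chi> = {\<chi>}"
      unfolding char_extensions_def using less.prems(3) char_restrict_self by auto
    then show ?thesis using True by simp
  next
    case False
    then obtain s where s: "s \<in> S" "s \<notin> H"
      using less.prems(2) by blast
    let ?J = "subgroup_join H s"
    note join = subgroup_join_subgroup[OF S less.prems(1,2) s(1)]
      subset_subgroup_join[OF S less.prems(1,2) s(1)]
      subgroup_join_subset[OF S less.prems(1,2) s(1)]
    have "card (S - ?J) < card (S - H)"
      using S(1) join(2,3) s mem_subgroup_join[OF S less.prems(1,2) s(1)]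
      by (intro psubset_card_mono) auto
    then have IH: "card S = card ?J * card (char_extensions S ?J \<chi>')" if "\<chi>' \<in> chars ?J" for \<chi>'
      using less.hyps join(1,3) that by blast
    have card_join_extensions: "card (char_extensions ?J H \<chi>) = order_mod H s"
      by (rule card_char_extensions_join[OF S less.prems(1,2) s(1) less.prems(3)])
    moreover have "0 < order_mod H s"
      by (rule order_mod_pos[OF S less.prems(1,2) s(1)])
    ultimately obtain \<chi>0 where \<chi>0: "\<chi>0 \<in> char_extensions ?J H \<chi>"
      by (metis card.empty ex_in_conv less_irrefl)
    let ?c = "card S div card ?J"
    have "0 < card ?J"
      using join(1,3) S(1) subgroup_zero by (metis card_gt_0_iff finite_subset empty_iff)
    then have extensions_card: "card (char_extensions S ?J \<chi>') = ?c"
      if "\<chi>' \<in> char_extensions ?J H \<chi>" for \<chi>'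
      using IH[of \<chi>'] that unfolding char_extensions_def by simp
    have card_S: "card S = card ?J * ?c"
      using IH \<chi>0 extensions_card[OF \<chi>0] unfolding char_extensions_def by auto
    then have "0 < ?c"
      using S subgroup_zero by (metis card_gt_0_iff empty_iff mult_0_right neq0_conv)
    moreover have "finite (char_extensions ?J H \<chi>)"
      using card_ge_0_finite card_join_extensions \<open>0 < order_mod H s\<close> by metis
    ultimately have "card (char_extensions S H \<chi>) = order_mod H s * ?c"
      using card_char_extensions_UN[OF join(2,3,1) _ extensions_card] card_join_extensions by simp
    then show ?thesis
      using card_subgroup_join[OF S less.prems(1,2) s(1)] card_S by (simp add: ac_simps)
  qed
qed

lemma root_of_unity_ne_1:
  assumes "1 < m"
  shows "\<exists>\<omega>::complex. \<omega> ^ m = 1 \<and> \<omega> \<noteq> 1"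
proof (rule ccontr)
  assume "\<not> ?thesis"
  then have "{\<omega>::complex. \<omega> ^ m = 1} = {1}"
    by auto
  then show False
    using card_roots_unity_eq[of m] assms by simp
qed

lemma additive_subgroup_zero: "additive_subgroup {0}"
  by (rule additive_subgroupI) auto

lemma trivial_char: "(\<lambda>_. 1) \<in> chars S"
  unfolding chars_def by simp

lemma char_extensions_zero:
  assumes "additive_subgroup S"
  shows "char_extensions S {0} (\<lambda>_. 1) = chars S"
  unfolding char_extensions_def char_restrict_def using chars_zero[OF assms] by (auto intro!: ext)

context
  fixes S :: "'g::ab_group_add set"
  assumes S: "finite S" "additive_subgroup S"
begin

lemma card_chars: "card (chars S) = card S"
  using card_char_extensions[OF S additive_subgroup_zero _ trivial_char] subgroup_zero[OF S(2)]
  by (simp add: char_extensions_zero[OF S(2)])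

lemma chars_separate:
  assumes a: "a \<in> S" "a \<noteq> 0"
  shows "\<exists>r\<in>chars S. r a \<noteq> 1"
proof -
  let ?J = "subgroup_join {0} a" and ?m = "order_mod {0} a"
  have "{0} \<subseteq> S"
    using subgroup_zero[OF S(2)] by simp
  note setting = S additive_subgroup_zero this a(1)
  have "?m \<noteq> 1"
  proof
    assume "?m = 1"
    then show False
      using zsmul_order_mod[OF setting] a(2) by simp
  qed
  then have "1 < ?m"
    using order_mod_pos[OF setting] by simp
  then obtain \<omega> :: complex where \<omega>: "\<omega> ^ ?m = 1" "\<omega> \<noteq> 1"
    using root_of_unity_ne_1 by blast
  then obtain \<chi> where \<chi>: "\<chi> \<in> char_extensions ?J {0} (\<lambda>_. 1)" "\<chi> a = \<omega>"
    using char_extensions_join_exists[OF setting trivial_char, of \<omega>] by auto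
  then have "\<chi> \<in> chars ?J"
    unfolding char_extensions_def by blast
  then have "card S = card ?J * card (char_extensions S ?J \<chi>)"
    using card_char_extensions[OF S subgroup_join_subgroup[OF setting] subgroup_join_subset[OF setting]]
    by blast
  moreover have "card S \<noteq> 0"
    using S subgroup_zero by (metis card_0_eq empty_iff)
  ultimately have "char_extensions S ?J \<chi> \<noteq> {}"
    by auto
  then obtain r where r: "r \<in> char_extensions S ?J \<chi>"
    by blast
  then have "r a = \<omega>"
    using char_extensions_apply[OF r mem_subgroup_join[OF setting]] \<chi>(2) by simp
  then show ?thesis
    using r \<omega>(2) unfolding char_extensions_def by blast
qed

lemma sum_chars:
  assumes a: "a \<in> S"
  shows "(\<Sum>r\<in>chars S. r a) = (if a = 0 then of_nat (card S) else 0)"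
proof (cases "a = 0")
  case True
  have "(\<Sum>r\<in>chars S. r 0) = (\<Sum>r\<in>chars S. 1)"
    using chars_zero[OF S(2)] by (intro sum.cong) auto
  then show ?thesis
    using True card_chars by simp
next
  case False
  obtain r0 where r0: "r0 \<in> chars S" "r0 a \<noteq> 1"
    using chars_separate[OF a False] by blast
  have r0_inverse: "inverse (r0 b) * r0 b = 1" for b
    using chars_nonzero[OF r0(1)] by simp
  txt \<open>Multiplication by r0 permutes the characters.\<close>
  have "(\<Sum>r\<in>chars S. r0 a * r a) = (\<Sum>r\<in>chars S. r a)"
  proof (rule sum.reindex_bij_witness[where j = "\<lambda>r b. r0 b * r b" and i = "\<lambda>r b. inverse (r0 b) * r b"])
    fix r assume r: "r \<in> chars S"
    show "(\<lambda>b. inverse (r0 b) * (r0 b * r b)) = r"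
      using r0_inverse by (simp add: mult.assoc[symmetric])
    show "(\<lambda>b. r0 b * (inverse (r0 b) * r b)) = r"
      using r0_inverse by (simp add: mult.assoc[symmetric] mult.commute)
    show "(\<lambda>b. r0 b * r b) \<in> chars S" "(\<lambda>b. inverse (r0 b) * r b) \<in> chars S"
      using r r0(1) unfolding chars_def by (auto simp: norm_mult norm_inverse)
  qed simp
  then have "(r0 a - 1) * (\<Sum>r\<in>chars S. r a) = 0"
    by (simp add: sum_distrib_left left_diff_distrib sum_subtractf)
  then show ?thesis
    using r0(2) False by simp
qed

end

section \<open>Cochains and coboundaries\<close>

locale chain_complex_pair =
  fixes K :: "int \<Rightarrow> 'k set" and dC :: "int \<Rightarrow> 'k \<Rightarrow> 'k \<Rightarrow> int"
    and G :: "int \<Rightarrow> 'g::ab_group_add set" and dG :: "int \<Rightarrow> 'g \<Rightarrow> 'g"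
  assumes K_fin: "\<And>n. finite (K n)"
    and K_supp: "finite {n. K n \<noteq> {}}"
    and dC_sq: "\<And>n x z. x \<in> K n \<Longrightarrow> z \<in> K (n - 2) \<Longrightarrow>
                 (\<Sum>y\<in>K (n - 1). dC n x y * dC (n - 1) y z) = 0"
    and G_fin: "\<And>n. finite (G n)"
    and G_zero: "\<And>n. 0 \<in> G n"
    and G_add: "\<And>n a b. a \<in> G n \<Longrightarrow> b \<in> G n \<Longrightarrow> a + b \<in> G n"
    and G_neg: "\<And>n a. a \<in> G n \<Longrightarrow> - a \<in> G n"
    and dG_maps: "\<And>n a. a \<in> G n \<Longrightarrow> dG n a \<in> G (n - 1)"
    and dG_add: "\<And>n a b. a \<in> G n \<Longrightarrow> b \<in> G n \<Longrightarrow> dG n (a + b) = dG n a + dG n b"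
    and dG_sq: "\<And>n a. a \<in> G n \<Longrightarrow> dG (n - 1) (dG n a) = 0"
begin

abbreviation "C0 \<equiv> cochains K G 0"
abbreviation "Cm1 \<equiv> cochains K G (-1)"
abbreviation "d0 \<equiv> delta K dC dG 0"
abbreviation "dm1 \<equiv> delta K dC dG (-1)"

lemma G_subgroup: "additive_subgroup (G n)"
  by (rule additive_subgroupI) (fact G_zero G_add G_neg)+

lemma dG_zsmul: "a \<in> G n \<Longrightarrow> dG n (zsmul k a) = zsmul k (dG n a)"
  by (rule additive_hom_zsmul[OF G_subgroup dG_add])

lemma dG_sum: "(\<And>y. y \<in> A \<Longrightarrow> f y \<in> G n) \<Longrightarrow> dG n (sum f A) = (\<Sum>y\<in>A. dG n (f y))"
  by (rule additive_hom_sum[OF G_subgroup dG_add])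

lemma card_G_pos: "0 < card (G n)"
  using G_fin G_zero card_gt_0_iff by blast

lemma cochains_mem: "f \<in> cochains K G p \<Longrightarrow> x \<in> K n \<Longrightarrow> f n x \<in> G (n - p)"
  and cochains_outside: "f \<in> cochains K G p \<Longrightarrow> x \<notin> K n \<Longrightarrow> f n x = 0"
  unfolding cochains_def by blast+

lemma cochains_value_mem: "f \<in> cochains K G p \<Longrightarrow> f n x \<in> G (n - p)"
  by (cases "x \<in> K n") (simp_all add: cochains_mem cochains_outside G_zero)

lemma cochains_zero: "(\<lambda>n x. 0) \<in> cochains K G p"
  and cochains_add: "f \<in> cochains K G p \<Longrightarrow> g \<in> cochains K G p \<Longrightarrow> (\<lambda>n x. f n x + g n x) \<in> cochains K G p"
  and cochains_uminus: "f \<in> cochains K G p \<Longrightarrow> (\<lambda>n x. - f n x) \<in> cochains K G p"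
  unfolding cochains_def using G_zero G_add G_neg by auto

lemma finite_cell_set: "finite (Sigma {n. K n \<noteq> {}} K)"
  using K_supp K_fin by (intro finite_SigmaI) auto

lemma finite_cochains: "finite (cochains K G p)"
proof -
  let ?S = "Sigma {n. K n \<noteq> {}} K"
  let ?extend = "\<lambda>u n x. if x \<in> K n then u (n, x) else 0"
  have "cochains K G p \<subseteq> ?extend ` (Pi\<^sub>E ?S (\<lambda>(n, x). G (n - p)))"
  proof
    fix f assume f: "f \<in> cochains K G p"
    let ?u = "\<lambda>(n, x). if (n, x) \<in> ?S then f n x else undefined"
    have "?u \<in> Pi\<^sub>E ?S (\<lambda>(n, x). G (n - p))"
    proof (rule PiE_I)
      fix q assume "q \<in> ?S"
      then obtain n x where "q = (n, x)" "x \<in> K n"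
        by auto
      then show "?u q \<in> (\<lambda>(n, x). G (n - p)) q"
        using cochains_mem[OF f] by auto
    next
      fix q assume "q \<notin> ?S"
      then show "?u q = undefined"
        by (cases q) auto
    qed
    moreover have "f = ?extend ?u"
      using cochains_outside[OF f] by (intro ext) auto
    ultimately show "f \<in> ?extend ` (Pi\<^sub>E ?S (\<lambda>(n, x). G (n - p)))"
      by blast
  qed
  moreover have "finite (Pi\<^sub>E ?S (\<lambda>(n, x). G (n - p)))"
    using finite_cell_set G_fin by (intro finite_PiE) auto
  ultimately show ?thesis
    using finite_subset by blast
qed

lemma compC_mem: "f \<in> cochains K G p \<Longrightarrow> compC K dC n f x \<in> G (n - 1 - p)"
  unfolding compC_def
  by (intro subgroup_sum[OF G_subgroup] subgroup_zsmul[OF G_subgroup] cochains_value_mem)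

lemma compC_add: "compC K dC n (\<lambda>n x. f n x + g n x) x = compC K dC n f x + compC K dC n g x"
  unfolding compC_def by (simp add: zsmul_distrib sum.distrib)

lemma delta_outside: "x \<notin> K n \<Longrightarrow> delta K dC dG p f n x = 0"
  unfolding delta_def by simp

lemma delta_zero: "delta K dC dG p (\<lambda>n x. 0) = (\<lambda>n x. 0)"
  using dG_add[OF G_zero G_zero] unfolding delta_def compC_def by (intro ext) simp

lemma delta_add:
  assumes "f \<in> cochains K G p" "g \<in> cochains K G p"
  shows "delta K dC dG p (\<lambda>n x. f n x + g n x) = (\<lambda>n x. delta K dC dG p f n x + delta K dC dG p g n x)"
proof (intro ext)
  fix n x
  show "delta K dC dG p (\<lambda>n x. f n x + g n x) n x = delta K dC dG p f n x + delta K dC dG p g n x"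
    using dG_add[OF cochains_value_mem[OF assms(1)] cochains_value_mem[OF assms(2)]]
    unfolding delta_def compC_add by (simp add: algebra_simps)
qed

lemma delta_minus1_mem: assumes "t \<in> Cm1" shows "dm1 t \<in> C0"
proof -
  have "compC K dC n t x \<in> G n" "dG (n + 1) (t n x) \<in> G n" for n x
    using compC_mem[OF assms, of n x] dG_maps[OF cochains_value_mem[OF assms, of n x]] by simp_all
  then have "compC K dC n t x + dG (n + 1) (t n x) \<in> G n" for n x
    by (rule G_add)
  then show ?thesis
    unfolding cochains_def delta_def by simp
qed

lemma compC_compC: "x \<in> K n \<Longrightarrow> compC K dC n (\<lambda>m. compC K dC m f) x = 0"
proof -
  assume x: "x \<in> K n"
  have "compC K dC n (\<lambda>m. compC K dC m f) x
      = (\<Sum>y\<in>K (n - 1). \<Sum>z\<in>K (n - 2). zsmul (dC n x y * dC (n - 1) y z) (f (n - 2) z))"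
    unfolding compC_def by (simp add: zsmul_sum zsmul_mult)
  also have "\<dots> = (\<Sum>z\<in>K (n - 2). \<Sum>y\<in>K (n - 1). zsmul (dC n x y * dC (n - 1) y z) (f (n - 2) z))"
    by (rule sum.swap)
  also have "\<dots> = 0"
    using dC_sq[OF x] by (simp add: sum_zsmul)
  finally show ?thesis .
qed

lemma compC_dG:
  assumes "f \<in> cochains K G p"
  shows "compC K dC n (\<lambda>m y. dG (m - p) (f m y)) x = dG (n - 1 - p) (compC K dC n f x)"
  using cochains_value_mem[OF assms, of "n - 1"]
  unfolding compC_def by (simp add: dG_sum dG_zsmul subgroup_zsmul[OF G_subgroup])

lemma delta_delta: assumes t: "t \<in> Cm1" shows "d0 (dm1 t) = (\<lambda>n x. 0)"
proof (intro ext)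
  fix n x
  show "d0 (dm1 t) n x = 0"
  proof (cases "x \<in> K n")
    case True
    have "compC K dC n (dm1 t) x
        = compC K dC n (\<lambda>m y. compC K dC m t y + dG (m - -1) (t m y)) x"
      unfolding compC_def[of K dC n] by (intro sum.cong) (simp_all add: delta_def)
    also have "\<dots> = dG n (compC K dC n t x)"
      using compC_compC[OF True] compC_dG[OF t] by (simp add: compC_add)
    also have "\<dots> = dG n (dm1 t n x)"
    proof -
      have t_mem: "t n x \<in> G (n + 1)"
        using cochains_value_mem[OF t, of n x] by simp
      have "compC K dC n t x \<in> G n" "dG (n + 1) (t n x) \<in> G n"
        using compC_mem[OF t, of n x] dG_maps[OF t_mem] by simp_all
      then show ?thesis
        using dG_add dG_sq[OF t_mem] True unfolding delta_def by simp
    qed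
    finally show ?thesis
      using True unfolding delta_def[of K dC dG 0 "dm1 t"] by simp
  qed (rule delta_outside)
qed

lemma delta0_mem: assumes "g \<in> C0" shows "d0 g n x \<in> G (n - 1)"
proof -
  have "compC K dC n g x \<in> G (n - 1)" "dG n (g n x) \<in> G (n - 1)"
    using compC_mem[OF assms, of n x] dG_maps[OF cochains_value_mem[OF assms, of n x]] by simp_all
  then have "compC K dC n g x - dG n (g n x) \<in> G (n - 1)"
    by (rule subgroup_diff[OF G_subgroup])
  then show ?thesis
    unfolding delta_def using G_zero by simp
qed

section \<open>The vertex and face projectors\<close>

lemma Aop_apply: "Aop K dC dG t \<Psi> g = \<Psi> (\<lambda>n x. g n x - dm1 t n x)"
  unfolding Aop_def Pop_def by simp

lemma Aop_Aop:
  assumes "t \<in> Cm1" "t' \<in> Cm1"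
  shows "Aop K dC dG t (Aop K dC dG t' \<Psi>) = Aop K dC dG (\<lambda>n x. t n x + t' n x) \<Psi>"
  unfolding Aop_apply delta_add[OF assms] by (simp add: algebra_simps)

lemma Aop_average_invariant:
  assumes t: "t \<in> Cm1" and \<phi>: "\<And>i. i \<in> I \<Longrightarrow> \<phi> i \<in> Cm1"
    and \<sigma>: "bij_betw \<sigma> I I" "\<And>i. i \<in> I \<Longrightarrow> \<phi> (\<sigma> i) = (\<lambda>n x. t n x + \<phi> i n x)"
  shows "Aop K dC dG t (\<lambda>g. c * (\<Sum>i\<in>I. Aop K dC dG (\<phi> i) \<Psi> g))
       = (\<lambda>g. c * (\<Sum>i\<in>I. Aop K dC dG (\<phi> i) \<Psi> g))"
proof
  fix g
  have "Aop K dC dG t (\<lambda>g. c * (\<Sum>i\<in>I. Aop K dC dG (\<phi> i) \<Psi> g)) g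
      = c * (\<Sum>i\<in>I. Aop K dC dG t (Aop K dC dG (\<phi> i) \<Psi>) g)"
    by (simp add: Aop_apply)
  also have "\<dots> = c * (\<Sum>i\<in>I. Aop K dC dG (\<phi> (\<sigma> i)) \<Psi> g)"
    using Aop_Aop[OF t \<phi>] \<sigma>(2) by (auto intro!: sum.cong)
  also have "\<dots> = c * (\<Sum>i\<in>I. Aop K dC dG (\<phi> i) \<Psi> g)"
    using sum.reindex_bij_betw[OF \<sigma>(1), of "\<lambda>i. Aop K dC dG (\<phi> i) \<Psi> g"] by simp
  finally show "Aop K dC dG t (\<lambda>g. c * (\<Sum>i\<in>I. Aop K dC dG (\<phi> i) \<Psi> g)) g
      = c * (\<Sum>i\<in>I. Aop K dC dG (\<phi> i) \<Psi> g)" .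
qed

lemma locdual_mem: "x \<in> K n \<Longrightarrow> h \<in> G (n + 1) \<Longrightarrow> locdual h n x \<in> Cm1"
  unfolding cochains_def locdual_def using G_zero by auto

lemma locdual_add: "locdual (h + h' :: 'g) n x = (\<lambda>m y. locdual h n x m y + locdual h' n x m y)"
  unfolding locdual_def by (intro ext) simp

lemma Ax0_fixed_imp_locdual_fixed:
  assumes x: "x \<in> K n" and fixed: "Ax0 K G dC dG n x \<Psi> = \<Psi>" and h: "h \<in> G (n + 1)"
  shows "Aop K dC dG (locdual h n x) \<Psi> = \<Psi>"
proof -
  have "Aop K dC dG (locdual h n x) (Ax0 K G dC dG n x \<Psi>) = Ax0 K G dC dG n x \<Psi>"
    unfolding Ax0_def
    by (rule Aop_average_invariant[where \<phi> = "\<lambda>h. locdual h n x", OF locdual_mem[OF x h]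
          locdual_mem[OF x] bij_betw_add_left[OF G_subgroup h] locdual_add])
  then show ?thesis
    using fixed by simp
qed

lemma locdual_fixed_imp_fixed:
  assumes fixed: "\<And>n x h. x \<in> K n \<Longrightarrow> h \<in> G (n + 1) \<Longrightarrow> Aop K dC dG (locdual h n x) \<Psi> = \<Psi>"
    and t: "t \<in> Cm1"
  shows "Aop K dC dG t \<Psi> = \<Psi>"
proof -
  let ?S = "Sigma {n. K n \<noteq> {}} K"
  define restrict_to where "restrict_to F = (\<lambda>m y. if (m, y) \<in> F then t m y else 0)" for F
  have restrict_mem: "restrict_to F \<in> Cm1" for F
    unfolding restrict_to_def cochains_def using cochains_mem[OF t] cochains_outside[OF t] G_zero by auto
  have "finite F \<Longrightarrow> F \<subseteq> ?S \<Longrightarrow> Aop K dC dG (restrict_to F) \<Psi> = \<Psi>" for F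
  proof (induction F rule: finite_subset_induct)
    case empty
    have "restrict_to {} = (\<lambda>n x. 0)"
      unfolding restrict_to_def by simp
    then show ?case
      by (simp add: Aop_apply delta_zero)
  next
    case (insert q F)
    obtain n x where q: "q = (n, x)" "x \<in> K n"
      using insert(2) by auto
    have "restrict_to (insert q F) = (\<lambda>m y. locdual (t n x) n x m y + restrict_to F m y)"
      unfolding restrict_to_def locdual_def q(1) using insert(3) q(1) by (intro ext) auto
    then have "Aop K dC dG (restrict_to (insert q F)) \<Psi>
        = Aop K dC dG (locdual (t n x) n x) (Aop K dC dG (restrict_to F) \<Psi>)"
      using Aop_Aop[OF locdual_mem[OF q(2)] restrict_mem] cochains_mem[OF t q(2)] by simp
    then show ?case
      using insert(4) fixed[OF q(2)] cochains_mem[OF t q(2)] by simp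
  qed
  moreover have "restrict_to ?S = t"
    unfolding restrict_to_def using cochains_outside[OF t] by (intro ext) auto
  ultimately show ?thesis
    using finite_cell_set by force
qed

lemma Ax0_fixed_iff:
  "(\<forall>n x. x \<in> K n \<longrightarrow> Ax0 K G dC dG n x \<Psi> = \<Psi>) \<longleftrightarrow> (\<forall>t\<in>Cm1. Aop K dC dG t \<Psi> = \<Psi>)"
proof
  assume "\<forall>n x. x \<in> K n \<longrightarrow> Ax0 K G dC dG n x \<Psi> = \<Psi>"
  then show "\<forall>t\<in>Cm1. Aop K dC dG t \<Psi> = \<Psi>"
    using Ax0_fixed_imp_locdual_fixed locdual_fixed_imp_fixed by blast
next
  assume fixed: "\<forall>t\<in>Cm1. Aop K dC dG t \<Psi> = \<Psi>"
  show "\<forall>n x. x \<in> K n \<longrightarrow> Ax0 K G dC dG n x \<Psi> = \<Psi>"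
  proof (intro allI impI ext)
    fix n x g assume x: "x \<in> K n"
    have "(\<Sum>h\<in>G (n + 1). Aop K dC dG (locdual h n x) \<Psi> g) = (\<Sum>h\<in>G (n + 1). \<Psi> g)"
      using fixed locdual_mem[OF x] by (intro sum.cong) auto
    then show "Ax0 K G dC dG n x \<Psi> g = \<Psi> g"
      using card_G_pos[of "n + 1"] by (simp add: Ax0_def)
  qed
qed

lemma Bx0_apply:
  assumes "g \<in> C0"
  shows "Bx0 K G dC dG n x \<Psi> g = (if d0 g n x = 0 then \<Psi> g else 0)"
proof -
  have "Bx0 K G dC dG n x \<Psi> g = (\<Sum>r\<in>chars (G (n - 1)). r (d0 g n x)) * \<Psi> g / of_nat (card (G (n - 1)))"
    unfolding Bx0_def Bop_def Qop_def locchar_def by (simp add: sum_distrib_right)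
  then show ?thesis
    using sum_chars[OF G_fin G_subgroup delta0_mem[OF assms]] card_G_pos[of "n - 1"] by simp
qed

lemma Bx0_fixed_iff:
  assumes \<Psi>: "\<Psi> \<in> Hspace K G"
  shows "(\<forall>n x. x \<in> K n \<longrightarrow> Bx0 K G dC dG n x \<Psi> = \<Psi>) \<longleftrightarrow> (\<forall>g. \<Psi> g \<noteq> 0 \<longrightarrow> d0 g = (\<lambda>n x. 0))"
proof -
  have "\<Psi> g \<noteq> 0 \<Longrightarrow> g \<in> C0" for g
    using \<Psi> unfolding Hspace_def by blast
  then have B: "Bx0 K G dC dG n x \<Psi> g = (if d0 g n x = 0 then \<Psi> g else 0)" for n x g
    by (cases "\<Psi> g = 0") (simp_all add: Bx0_apply, simp add: Bx0_def Bop_def Qop_def)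
  show ?thesis
  proof (intro iffI allI impI ext)
    fix g n x
    assume fixed: "\<forall>n x. x \<in> K n \<longrightarrow> Bx0 K G dC dG n x \<Psi> = \<Psi>" and nonzero: "\<Psi> g \<noteq> 0"
    show "d0 g n x = 0"
    proof (cases "x \<in> K n")
      case True
      then have "Bx0 K G dC dG n x \<Psi> g = \<Psi> g"
        using fixed by simp
      then show ?thesis
        using B[of n x g] nonzero by (simp split: if_splits)
    qed (rule delta_outside)
  next
    fix n x g
    assume closed: "\<forall>g. \<Psi> g \<noteq> 0 \<longrightarrow> d0 g = (\<lambda>n x. 0)"
    show "Bx0 K G dC dG n x \<Psi> g = \<Psi> g"
      using B[of n x g] closed by (cases "\<Psi> g = 0") auto
  qed
qed

end

section \<open>The ground state space\<close>

lemma cspan_sum_image: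
  assumes "finite Z"
  shows "(\<lambda>g. \<Sum>f\<in>Z. c f * a f g) \<in> cspan (a ` Z)"
proof -
  define c' where "c' v = (\<Sum>f\<in>{f \<in> Z. a f = v}. c f)" for v
  have "(\<Sum>v\<in>a ` Z. c' v * v g) = (\<Sum>f\<in>Z. c f * a f g)" for g
  proof -
    have "(\<Sum>v\<in>a ` Z. c' v * v g) = (\<Sum>v\<in>a ` Z. \<Sum>f\<in>{f \<in> Z. a f = v}. c f * a f g)"
      unfolding c'_def sum_distrib_right by (intro sum.cong refl) auto
    also have "\<dots> = (\<Sum>f\<in>Z. c f * a f g)"
      using sum.image_gen[OF assms, of "\<lambda>f. c f * a f g" a] by simp
    finally show ?thesis .
  qed
  then show ?thesis
    unfolding cspan_def using assms by (intro CollectI exI[of _ "a ` Z"] exI[of _ c']) auto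
qed

context chain_complex_pair
begin

lemma mem_H0_iff:
  "\<Psi> \<in> H0 K G dC dG \<longleftrightarrow> \<Psi> \<in> Hspace K G \<and> (\<forall>t\<in>Cm1. Aop K dC dG t \<Psi> = \<Psi>)
    \<and> (\<forall>g. \<Psi> g \<noteq> 0 \<longrightarrow> d0 g = (\<lambda>n x. 0))"
  unfolding H0_def using Ax0_fixed_iff Bx0_fixed_iff by blast

lemma card_Cm1_pos: "0 < card Cm1"
  using finite_cochains cochains_zero card_gt_0_iff by blast

lemma A0_apply: "A0 K G dC dG \<Psi> g = (\<Sum>t\<in>Cm1. \<Psi> (\<lambda>n x. g n x - dm1 t n x)) / of_nat (card Cm1)"
  unfolding A0_def Aop_apply by simp

lemma Aop_A0:
  assumes t: "t \<in> Cm1"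
  shows "Aop K dC dG t (A0 K G dC dG \<Psi>) = A0 K G dC dG \<Psi>"
proof -
  have bij: "bij_betw (\<lambda>t' n x. t n x + t' n x) Cm1 Cm1"
    by (rule bij_betw_byWitness[where f' = "\<lambda>t' n x. - t n x + t' n x"])
      (use cochains_add[OF t] cochains_add[OF cochains_uminus[OF t]] in \<open>auto simp: add.assoc[symmetric]\<close>)
  show ?thesis
    unfolding A0_def by (rule Aop_average_invariant[OF t _ bij]) simp_all
qed

lemma A0_ket_support:
  assumes "A0 K G dC dG (ket f) g \<noteq> 0"
  shows "\<exists>t\<in>Cm1. g = (\<lambda>n x. f n x + dm1 t n x)"
proof -
  have "(\<Sum>t\<in>Cm1. ket f (\<lambda>n x. g n x - dm1 t n x)) \<noteq> 0"
    using assms unfolding A0_apply by auto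
  then obtain t where "t \<in> Cm1" "ket f (\<lambda>n x. g n x - dm1 t n x) \<noteq> 0"
    by (rule sum.not_neutral_contains_not_neutral)
  then have "t \<in> Cm1" "(\<lambda>n x. g n x - dm1 t n x) = f"
    unfolding ket_def by (simp_all split: if_splits)
  then show ?thesis
    by (auto simp: fun_eq_iff algebra_simps)
qed

lemma A0_ket_self: "A0 K G dC dG (ket f) f \<noteq> 0"
proof -
  let ?T = "{t \<in> Cm1. (\<lambda>n x. f n x - dm1 t n x) = f}"
  have "(\<Sum>t\<in>Cm1. ket f (\<lambda>n x. f n x - dm1 t n x)) = (\<Sum>t\<in>?T. 1)"
    unfolding ket_def by (rule sum.inter_filter[OF finite_cochains, symmetric])
  moreover have "card ?T \<noteq> 0"
  proof -
    have "(\<lambda>n x. 0) \<in> ?T"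
      using cochains_zero delta_zero by simp
    moreover have "finite ?T"
      using finite_cochains by simp
    ultimately show ?thesis
      by (auto simp: card_eq_0_iff)
  qed
  ultimately show ?thesis
    unfolding A0_apply using card_Cm1_pos by simp
qed

lemma A0_ket_mem_H0_iff:
  assumes f: "f \<in> C0"
  shows "A0 K G dC dG (ket f) \<in> H0 K G dC dG \<longleftrightarrow> d0 f = (\<lambda>n x. 0)"
proof
  assume "A0 K G dC dG (ket f) \<in> H0 K G dC dG"
  then show "d0 f = (\<lambda>n x. 0)"
    using A0_ket_self[of f] unfolding mem_H0_iff by blast
next
  assume closed: "d0 f = (\<lambda>n x. 0)"
  have "g \<in> C0 \<and> d0 g = (\<lambda>n x. 0)" if nonzero: "A0 K G dC dG (ket f) g \<noteq> 0" for g
  proof -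
    obtain t where t: "t \<in> Cm1" "g = (\<lambda>n x. f n x + dm1 t n x)"
      using A0_ket_support[OF nonzero] by blast
    then show ?thesis
      using cochains_add[OF f delta_minus1_mem[OF t(1)]] delta_add[OF f delta_minus1_mem[OF t(1)]]
        closed delta_delta[OF t(1)] by simp
  qed
  then show "A0 K G dC dG (ket f) \<in> H0 K G dC dG"
    unfolding mem_H0_iff Hspace_def using Aop_A0 by blast
qed

lemma H0_linear_combination:
  assumes "finite A" "A \<subseteq> H0 K G dC dG"
  shows "(\<lambda>g. \<Sum>v\<in>A. c v * v g) \<in> H0 K G dC dG"
proof -
  have A: "v \<in> Hspace K G" "\<forall>t\<in>Cm1. Aop K dC dG t v = v" "\<forall>g. v g \<noteq> 0 \<longrightarrow> d0 g = (\<lambda>n x. 0)"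
    if "v \<in> A" for v
    using subsetD[OF assms(2) that] unfolding mem_H0_iff by blast+
  have "d0 g = (\<lambda>n x. 0)" if nonzero: "(\<Sum>v\<in>A. c v * v g) \<noteq> 0" for g
  proof -
    obtain v where "v \<in> A" "c v * v g \<noteq> 0"
      using nonzero by (rule sum.not_neutral_contains_not_neutral)
    then show ?thesis
      using A(3) by simp
  qed
  moreover have "Aop K dC dG t (\<lambda>g. \<Sum>v\<in>A. c v * v g) = (\<lambda>g. \<Sum>v\<in>A. c v * v g)"
    if "t \<in> Cm1" for t
  proof -
    have "v (\<lambda>n x. g n x - dm1 t n x) = v g" if "v \<in> A" for v g
      using A(2)[OF that] \<open>t \<in> Cm1\<close> unfolding Aop_apply by (metis (no_types, lifting))
    then show ?thesis
      unfolding Aop_apply by (intro ext sum.cong) auto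
  qed
  moreover have "(\<Sum>v\<in>A. c v * v g) = 0" if "g \<notin> C0" for g
    using A(1) that unfolding Hspace_def by (intro sum.neutral) simp
  ultimately show ?thesis
    unfolding mem_H0_iff Hspace_def by blast
qed

lemma H0_expansion:
  assumes \<Psi>: "\<Psi> \<in> H0 K G dC dG"
  shows "\<Psi> = (\<lambda>g. \<Sum>f\<in>{f \<in> C0. d0 f = (\<lambda>n x. 0)}. \<Psi> f * A0 K G dC dG (ket f) g)"
proof
  fix g
  let ?Z = "{f \<in> C0. d0 f = (\<lambda>n x. 0)}"
  have finite_Z: "finite ?Z"
    using finite_cochains by simp
  have outside_Z: "\<Psi> h = 0" if "h \<notin> ?Z" for h
    using \<Psi> that unfolding mem_H0_iff Hspace_def by blast
  have ket_expansion: "(\<Sum>f\<in>?Z. \<Psi> f * ket f h) = \<Psi> h" for h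
  proof -
    have "(\<Sum>f\<in>?Z. \<Psi> f * ket f h) = (\<Sum>f\<in>?Z. if h = f then \<Psi> h else 0)"
      unfolding ket_def by (intro sum.cong) auto
    also have "\<dots> = \<Psi> h"
      using finite_Z outside_Z by simp
    finally show ?thesis .
  qed
  have shift_invariant: "\<Psi> (\<lambda>n x. g n x - dm1 t n x) = \<Psi> g" if "t \<in> Cm1" for t
  proof -
    have "Aop K dC dG t \<Psi> = \<Psi>"
      using \<Psi> that unfolding mem_H0_iff by blast
    then show ?thesis
      unfolding Aop_apply by (rule fun_cong)
  qed
  have "(\<Sum>f\<in>?Z. \<Psi> f * A0 K G dC dG (ket f) g)
      = (\<Sum>t\<in>Cm1. \<Sum>f\<in>?Z. \<Psi> f * ket f (\<lambda>n x. g n x - dm1 t n x)) / of_nat (card Cm1)"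
    unfolding A0_apply sum_divide_distrib sum_distrib_left
    by (subst sum.swap) (simp add: mult.assoc)
  also have "\<dots> = (\<Sum>t\<in>Cm1. \<Psi> g) / of_nat (card Cm1)"
    by (simp add: ket_expansion shift_invariant)
  finally show "\<Psi> g = (\<Sum>f\<in>?Z. \<Psi> f * A0 K G dC dG (ket f) g)"
    using card_Cm1_pos by simp
qed

lemma H0_eq_span:
  "H0 K G dC dG = cspan ((\<lambda>f. A0 K G dC dG (ket f)) ` {f \<in> C0. d0 f = (\<lambda>n x. 0)})"
proof
  show "cspan ((\<lambda>f. A0 K G dC dG (ket f)) ` {f \<in> C0. d0 f = (\<lambda>n x. 0)}) \<subseteq> H0 K G dC dG"
    unfolding cspan_def using A0_ket_mem_H0_iff H0_linear_combination by blast
next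
  have "finite {f \<in> C0. d0 f = (\<lambda>n x. 0)}"
    using finite_cochains by simp
  then show "H0 K G dC dG \<subseteq> cspan ((\<lambda>f. A0 K G dC dG (ket f)) ` {f \<in> C0. d0 f = (\<lambda>n x. 0)})"
  proof (intro subsetI)
    fix \<Psi> assume \<Psi>: "\<Psi> \<in> H0 K G dC dG"
    from \<open>finite _\<close> have "(\<lambda>g. \<Sum>f\<in>{f \<in> C0. d0 f = (\<lambda>n x. 0)}. \<Psi> f * A0 K G dC dG (ket f) g)
        \<in> cspan ((\<lambda>f. A0 K G dC dG (ket f)) ` {f \<in> C0. d0 f = (\<lambda>n x. 0)})"
      by (rule cspan_sum_image)
    then show "\<Psi> \<in> cspan ((\<lambda>f. A0 K G dC dG (ket f)) ` {f \<in> C0. d0 f = (\<lambda>n x. 0)})"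
      unfolding H0_expansion[OF \<Psi>, symmetric] .
  qed
qed

end

theorem proposition4:
  fixes K :: "int \<Rightarrow> 'k set" and dC :: "int \<Rightarrow> 'k \<Rightarrow> 'k \<Rightarrow> int"
    and G :: "int \<Rightarrow> 'g::ab_group_add set" and dG :: "int \<Rightarrow> 'g \<Rightarrow> 'g"
  assumes K_fin: "\<And>n. finite (K n)"
    and K_supp: "finite {n. K n \<noteq> {}}"
    and dC_sq: "\<And>n x z. x \<in> K n \<Longrightarrow> z \<in> K (n - 2) \<Longrightarrow>
                 (\<Sum>y\<in>K (n - 1). dC n x y * dC (n - 1) y z) = 0"
    and G_fin: "\<And>n. finite (G n)"
    and G_zero: "\<And>n. 0 \<in> G n"
    and G_add: "\<And>n a b. a \<in> G n \<Longrightarrow> b \<in> G n \<Longrightarrow> a + b \<in> G n"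
    and G_neg: "\<And>n a. a \<in> G n \<Longrightarrow> - a \<in> G n"
    and dG_maps: "\<And>n a. a \<in> G n \<Longrightarrow> dG n a \<in> G (n - 1)"
    and dG_add: "\<And>n a b. a \<in> G n \<Longrightarrow> b \<in> G n \<Longrightarrow> dG n (a + b) = dG n a + dG n b"
    and dG_sq: "\<And>n a. a \<in> G n \<Longrightarrow> dG (n - 1) (dG n a) = 0"
  shows "H0 K G dC dG = cspan ((\<lambda>f. A0 K G dC dG (ket f)) `
                          {f \<in> cochains K G 0. delta K dC dG 0 f = (\<lambda>n x. 0)})
       \<and> (\<forall>f \<in> cochains K G 0.
            A0 K G dC dG (ket f) \<in> H0 K G dC dG \<longleftrightarrow> delta K dC dG 0 f = (\<lambda>n x. 0))"
proof -
  interpret chain_complex_pair K dC G dG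
    by unfold_locales (fact assms)+
  show ?thesis
    using H0_eq_span A0_ket_mem_H0_iff by blast
qed

end
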